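(* Fix a rooted tree $T$ on $t\ge2$ vertices and let $G$ be a connected graph with at least $2t$ vertices. Then any two pendant copies of $T$ in $G$ that share at least one vertex have the same root.
   Context: A pendant copy of the rooted tree $T$ in $G$ is a set $S$ of $t$ vertices of $G$ together with a bijection from the vertices of $T$ to $S$ such that two vertices of $S$ are adjacent in $G$ if and only if the corresponding vertices of $T$ are adjacent, and no vertex of $S$ other than the image of the root (called the root of the copy) has a neighbour outside $S$. Equivalently, $G$ is obtained by identifying the root of $T$ with a vertex of a graph $H$. *)

theory Defs
  imports Main
begin

definition simple_graph :: "'a set \<Rightarrow> ('a \<Rightarrow> 'a \<Rightarrow> bool) \<Rightarrow> bool" where
  "simple_graph V E \<longleftrightarrow> finite V \<and> (\<forall>u v. E u v \<longrightarrow> E v u) \<and> (\<forall>u. \<not> E u u)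
     \<and> (\<forall>u v. E u v \<longrightarrow> u \<in> V \<and> v \<in> V)"

definition is_walk :: "'a set \<Rightarrow> ('a \<Rightarrow> 'a \<Rightarrow> bool) \<Rightarrow> 'a list \<Rightarrow> bool" where
  "is_walk V E p \<longleftrightarrow> p \<noteq> [] \<and> set p \<subseteq> V \<and> (\<forall>i. Suc i < length p \<longrightarrow> E (p ! i) (p ! Suc i))"

definition connected_graph :: "'a set \<Rightarrow> ('a \<Rightarrow> 'a \<Rightarrow> bool) \<Rightarrow> bool" where
  "connected_graph V E \<longleftrightarrow> V \<noteq> {} \<and>
     (\<forall>u\<in>V. \<forall>v\<in>V. \<exists>p. is_walk V E p \<and> hd p = u \<and> last p = v)"

definition is_cycle :: "'a set \<Rightarrow> ('a \<Rightarrow> 'a \<Rightarrow> bool) \<Rightarrow> 'a list \<Rightarrow> bool" where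
  "is_cycle V E c \<longleftrightarrow> is_walk V E c \<and> length c \<ge> 3 \<and> distinct c \<and> E (last c) (hd c)"

definition is_tree :: "'a set \<Rightarrow> ('a \<Rightarrow> 'a \<Rightarrow> bool) \<Rightarrow> bool" where
  "is_tree V E \<longleftrightarrow> simple_graph V E \<and> connected_graph V E \<and> (\<nexists>c. is_cycle V E c)"

definition rooted_tree :: "'b set \<Rightarrow> ('b \<Rightarrow> 'b \<Rightarrow> bool) \<Rightarrow> 'b \<Rightarrow> bool" where
  "rooted_tree VT ET r \<longleftrightarrow> is_tree VT ET \<and> r \<in> VT"

text \<open>Its root is f r.\<close>
definition pendant_copy ::
  "'b set \<Rightarrow> ('b \<Rightarrow> 'b \<Rightarrow> bool) \<Rightarrow> 'b \<Rightarrow> 'a set \<Rightarrow> ('a \<Rightarrow> 'a \<Rightarrow> bool) \<Rightarrow> 'a set \<Rightarrow> ('b \<Rightarrow> 'a) \<Rightarrow> bool" where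
  "pendant_copy VT ET r V E S f \<longleftrightarrow>
     S \<subseteq> V \<and> bij_betw f VT S \<and>
     (\<forall>x\<in>VT. \<forall>y\<in>VT. E (f x) (f y) \<longleftrightarrow> ET x y) \<and>
     (\<forall>v\<in>S. v \<noteq> f r \<longrightarrow> (\<forall>w. E v w \<longrightarrow> w \<in> S))"

end

theory Submission
  imports Defs
begin

text \<open>If the root of one pendant copy lay outside another copy meeting it, the second copy,
  being connected and unable to leave the first copy except through its root, would fit
  inside the first copy minus its root, which is too small. So each root lies in the other
  copy. If the roots were distinct, every vertex of the union would be a non-root vertex of
  one of the copies, so the union would have no outside neighbours; by connectivity it would
  be all of G, which has at least 2t vertices, whereas the union of two intersecting
  t-sets has fewer.\<close>

lemma is_walk_iff_successively:
  "is_walk V E p \<longleftrightarrow> p \<noteq> [] \<and> set p \<subseteq> V \<and> successively E p"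
  by (simp add: is_walk_def successively_conv_nth)

lemma successively_set_subset:
  assumes "successively E p" "p \<noteq> []" "hd p \<in> A" "set p \<inter> X = {}"
    and closed: "\<And>v w. v \<in> A \<Longrightarrow> E v w \<Longrightarrow> w \<in> A \<union> X"
  shows "set p \<subseteq> A"
  using assms(1-4)
proof (induction p)
  case Nil
  then show ?case by simp
next
  case (Cons a p)
  show ?case
  proof (cases "p = []")
    case False
    then have "E a (hd p)" "successively E p"
      using Cons.prems(1) by (simp_all add: successively_Cons)
    moreover have "hd p \<notin> X"
      using False Cons.prems(4) by (cases p) auto
    ultimately have "hd p \<in> A"
      using closed Cons.prems(3) by fastforce
    with Cons False \<open>successively E p\<close> show ?thesis by auto
  qed (use Cons.prems in simp)
qed

lemma connected_graph_subset_closed: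
  assumes conn: "connected_graph V E" and x: "x \<in> V" "x \<in> A" and avoid: "V \<inter> X = {}"
    and closed: "\<And>v w. v \<in> A \<Longrightarrow> E v w \<Longrightarrow> w \<in> A \<union> X"
  shows "V \<subseteq> A"
proof
  fix v assume "v \<in> V"
  then obtain p where p: "is_walk V E p" "hd p = x" "last p = v"
    using conn x unfolding connected_graph_def by blast
  have "set p \<subseteq> A"
    using p avoid x
    by (intro successively_set_subset[where E = E and X = X] closed)
      (auto simp: is_walk_iff_successively)
  moreover have "last p \<in> set p"
    using p(1) by (simp add: is_walk_def)
  ultimately show "v \<in> A"
    using p(3) by blast
qed

lemma connected_graph_image:
  assumes conn: "connected_graph VT ET"
    and hom: "\<And>x y. x \<in> VT \<Longrightarrow> y \<in> VT \<Longrightarrow> ET x y \<Longrightarrow> E (f x) (f y)"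
  shows "connected_graph (f ` VT) E"
  unfolding connected_graph_def
proof (intro conjI ballI)
  show "f ` VT \<noteq> {}"
    using conn by (simp add: connected_graph_def)
next
  fix u v assume "u \<in> f ` VT" "v \<in> f ` VT"
  then obtain a b where ab: "a \<in> VT" "b \<in> VT" "u = f a" "v = f b" by blast
  then obtain q where q: "is_walk VT ET q" "hd q = a" "last q = b"
    using conn unfolding connected_graph_def by blast
  have "successively E (map f q)"
    using q(1) hom unfolding is_walk_iff_successively successively_map
    by (auto elim!: successively_mono)
  with q ab have "is_walk (f ` VT) E (map f q) \<and> hd (map f q) = u \<and> last (map f q) = v"
    by (auto simp: is_walk_iff_successively hd_map last_map)
  then show "\<exists>p. is_walk (f ` VT) E p \<and> hd p = u \<and> last p = v" by blast
qed

lemma pendant_copy_connected: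
  assumes "rooted_tree VT ET r" "pendant_copy VT ET r V E S f"
  shows "connected_graph S E"
proof -
  have "connected_graph VT ET"
    using assms(1) by (simp add: rooted_tree_def is_tree_def)
  then have "connected_graph (f ` VT) E"
    by (rule connected_graph_image) (use assms(2) in \<open>simp add: pendant_copy_def\<close>)
  moreover have "S = f ` VT"
    using assms(2) by (simp add: pendant_copy_def bij_betw_def)
  ultimately show ?thesis by simp
qed

lemma pendant_copy_card:
  assumes "rooted_tree VT ET r" "pendant_copy VT ET r V E S f"
  shows "finite S" "card S = card VT"
proof -
  have "finite VT"
    using assms(1) by (simp add: rooted_tree_def is_tree_def simple_graph_def)
  moreover have "bij_betw f VT S"
    using assms(2) by (simp add: pendant_copy_def)
  ultimately show "finite S" "card S = card VT"
    by (auto simp: bij_betw_finite bij_betw_same_card)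
qed

lemma pendant_copy_root_mem:
  assumes "rooted_tree VT ET r" "pendant_copy VT ET r V E S f"
  shows "f r \<in> S"
  using assms by (auto simp: rooted_tree_def pendant_copy_def bij_betw_def)

lemma pendant_copy_closed:
  assumes "pendant_copy VT ET r V E S f" "v \<in> S" "v \<noteq> f r" "E v w"
  shows "w \<in> S"
  using assms by (auto simp: pendant_copy_def)

lemma pendant_copy_root_mem_other:
  assumes rt: "rooted_tree VT ET r"
    and P1: "pendant_copy VT ET r V E S1 f1" and P2: "pendant_copy VT ET r V E S2 f2"
    and meet: "S1 \<inter> S2 \<noteq> {}"
  shows "f1 r \<in> S2"
proof (rule ccontr)
  assume root: "f1 r \<notin> S2"
  obtain x where "x \<in> S1" "x \<in> S2" using meet by blast
  have "S2 \<subseteq> S1 - {f1 r}"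
  proof (rule connected_graph_subset_closed[where X = "{f1 r}"])
    show "connected_graph S2 E" using pendant_copy_connected[OF rt P2] .
    show "x \<in> S2" "x \<in> S1 - {f1 r}" using \<open>x \<in> S1\<close> \<open>x \<in> S2\<close> root by auto
    show "S2 \<inter> {f1 r} = {}" using root by blast
    show "w \<in> S1 - {f1 r} \<union> {f1 r}" if "v \<in> S1 - {f1 r}" "E v w" for v w
      using pendant_copy_closed[OF P1] that by blast
  qed
  then have "card S2 \<le> card (S1 - {f1 r})"
    using pendant_copy_card(1)[OF rt P1] by (intro card_mono) auto
  also have "\<dots> < card S1"
    using pendant_copy_card(1)[OF rt P1] pendant_copy_root_mem[OF rt P1] by (rule card_Diff1_less)
  finally show False
    using pendant_copy_card(2)[OF rt P1] pendant_copy_card(2)[OF rt P2] by simp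
qed

theorem lemma2p3:
  fixes VT :: "'b set" and ET :: "'b \<Rightarrow> 'b \<Rightarrow> bool" and r :: 'b
    and V :: "'a set" and E :: "'a \<Rightarrow> 'a \<Rightarrow> bool"
    and S1 S2 :: "'a set" and f1 f2 :: "'b \<Rightarrow> 'a"
  assumes "rooted_tree VT ET r"
    and "card VT \<ge> 2"
    and "simple_graph V E" and "connected_graph V E"
    and "card V \<ge> 2 * card VT"
    and "pendant_copy VT ET r V E S1 f1"
    and "pendant_copy VT ET r V E S2 f2"
    and "S1 \<inter> S2 \<noteq> {}"
  shows "f1 r = f2 r"
proof (rule ccontr)
  note rt = assms(1) and P1 = assms(6) and P2 = assms(7)
  assume roots: "f1 r \<noteq> f2 r"
  have "f1 r \<in> S2" "f2 r \<in> S1"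
    using pendant_copy_root_mem_other[OF rt P1 P2] pendant_copy_root_mem_other[OF rt P2 P1]
      assms(8) by blast+
  have closed: "w \<in> S1 \<union> S2 \<union> {}" if v: "v \<in> S1 \<union> S2" and e: "E v w" for v w
  proof (cases "v \<in> S1 \<and> v \<noteq> f1 r")
    case True
    then show ?thesis using pendant_copy_closed[OF P1 _ _ e] by blast
  next
    case False
    with v roots \<open>f2 r \<in> S1\<close> \<open>f1 r \<in> S2\<close> have "v \<in> S2" "v \<noteq> f2 r" by auto
    then show ?thesis using pendant_copy_closed[OF P2 _ _ e] by blast
  qed
  obtain x where x: "x \<in> S1" "x \<in> S2" using assms(8) by blast
  have "x \<in> V" using x P1 by (auto simp: pendant_copy_def)
  then have "V \<subseteq> S1 \<union> S2"
    by (rule connected_graph_subset_closed[OF assms(4) _ _ _ closed]) (use x in auto)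
  have fin: "finite S1" "finite S2" and card: "card S1 = card VT" "card S2 = card VT"
    using pendant_copy_card[OF rt P1] pendant_copy_card[OF rt P2] by auto
  have "card V \<le> card (S1 \<union> S2)"
    using \<open>V \<subseteq> S1 \<union> S2\<close> fin by (intro card_mono) auto
  moreover have "card (S1 \<union> S2) + card (S1 \<inter> S2) = card S1 + card S2"
    using fin by (rule card_Un_Int[symmetric])
  moreover have "card (S1 \<inter> S2) > 0"
    using assms(8) fin by (simp add: card_gt_0_iff)
  ultimately show False
    using assms(5) card by linarith
qed

end
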